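(* Let $k$ be a positive integer and $G$ a finite, simple, undirected, connected graph. (a) If $\mathrm{diam}(G)\in\{1,2\}$, then $O_{R,k}(G)=O_R(G)$ for all positive integers $k$. (b) For positive integers $k<k'$, the pair $(O_{R,k}(G),O_{R,k'}(G))$ belongs to $\{(\mathcal{B},\mathcal{B}),(\mathcal{N},\mathcal{N}),(\mathcal{M},\mathcal{M}),(\mathcal{B},\mathcal{N}),(\mathcal{B},\mathcal{M}),(\mathcal{N},\mathcal{M})\}$; moreover, $O_{R,k_0}(G)=O_R(G)$ for every $k_0\ge \mathrm{diam}(G)-1$.
   Context: $d(x,y)$ is the shortest-path distance in $G$, $d_k(x,y)=\min\{d(x,y),k+1\}$, and $\mathrm{diam}(G)=\max_{x,y}d(x,y)$. A set $S\subseteq V(G)$ is a distance-$k$ resolving set if for all distinct $x,y\in V(G)$ some $z\in S$ has $d_k(x,z)\neq d_k(y,z)$; it is a resolving set if the same holds with $d$ in place of $d_k$. In the Maker-Breaker distance-$k$ resolving game (MB$k$RG) on $G$, Maker and Breaker alternately select a not-yet-chosen vertex; Maker wins if his selected vertices form a distance-$k$ resolving set, Breaker wins otherwise. The $M$-game ($B$-game) is the game where Maker (Breaker) moves first. $O_{R,k}(G)=\mathcal{M}$ if Maker wins both the $M$-game and $B$-game with optimal play, $\mathcal{B}$ if Breaker wins both, and $\mathcal{N}$ if the first player wins. $O_R(G)$ is defined in the same way for the Maker-Breaker resolving game, in which Maker must form a resolving set (with respect to $d$). Outcomes are ordered $\mathcal{B}<\mathcal{N}<\mathcal{M}$. *)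

theory Defs
  imports Main
begin

definition simple_graph :: "'a set \<Rightarrow> ('a \<Rightarrow> 'a \<Rightarrow> bool) \<Rightarrow> bool" where
  "simple_graph V E \<longleftrightarrow> finite V \<and> V \<noteq> {} \<and>
     (\<forall>x y. E x y \<longrightarrow> x \<in> V \<and> y \<in> V) \<and>
     (\<forall>x y. E x y \<longrightarrow> E y x) \<and> (\<forall>x. \<not> E x x)"

fun gwalk :: "('a \<Rightarrow> 'a \<Rightarrow> bool) \<Rightarrow> 'a list \<Rightarrow> bool" where
  "gwalk E [] = False"
| "gwalk E [x] = True"
| "gwalk E (x # y # xs) = (E x y \<and> gwalk E (y # xs))"

definition connected_graph :: "'a set \<Rightarrow> ('a \<Rightarrow> 'a \<Rightarrow> bool) \<Rightarrow> bool" where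
  "connected_graph V E \<longleftrightarrow>
     (\<forall>x\<in>V. \<forall>y\<in>V. \<exists>p. gwalk E p \<and> hd p = x \<and> last p = y)"

definition gdist :: "('a \<Rightarrow> 'a \<Rightarrow> bool) \<Rightarrow> 'a \<Rightarrow> 'a \<Rightarrow> nat" where
  "gdist E x y = (LEAST n. \<exists>p. gwalk E p \<and> hd p = x \<and> last p = y \<and> length p = Suc n)"

definition gdist_k :: "nat \<Rightarrow> ('a \<Rightarrow> 'a \<Rightarrow> bool) \<Rightarrow> 'a \<Rightarrow> 'a \<Rightarrow> nat" where
  "gdist_k k E x y = min (gdist E x y) (k + 1)"

definition diam :: "'a set \<Rightarrow> ('a \<Rightarrow> 'a \<Rightarrow> bool) \<Rightarrow> nat" where
  "diam V E = Max {gdist E x y | x y. x \<in> V \<and> y \<in> V}"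

definition resolving_wrt :: "('a \<Rightarrow> 'a \<Rightarrow> nat) \<Rightarrow> 'a set \<Rightarrow> 'a set \<Rightarrow> bool" where
  "resolving_wrt d V S \<longleftrightarrow> S \<subseteq> V \<and>
     (\<forall>x\<in>V. \<forall>y\<in>V. x \<noteq> y \<longrightarrow> (\<exists>z\<in>S. d x z \<noteq> d y z))"

definition resolving_set :: "'a set \<Rightarrow> ('a \<Rightarrow> 'a \<Rightarrow> bool) \<Rightarrow> 'a set \<Rightarrow> bool" where
  "resolving_set V E S = resolving_wrt (gdist E) V S"

definition k_resolving_set :: "nat \<Rightarrow> 'a set \<Rightarrow> ('a \<Rightarrow> 'a \<Rightarrow> bool) \<Rightarrow> 'a set \<Rightarrow> bool" where
  "k_resolving_set k V E S = resolving_wrt (gdist_k k E) V S"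

text \<open>Maker-Breaker game on board V with Maker's winning predicate W.
  maker_wins W V M B t: from the position where Maker holds M, Breaker holds B,
  and it is Maker's turn iff t, Maker has a winning strategy. Maker wins as soon
  as his selected set satisfies W; the game ends when no free vertex remains.\<close>
inductive maker_wins :: "('a set \<Rightarrow> bool) \<Rightarrow> 'a set \<Rightarrow> 'a set \<Rightarrow> 'a set \<Rightarrow> bool \<Rightarrow> bool"
  for W V where
  won: "W M \<Longrightarrow> maker_wins W V M B t"
| maker_move: "x \<in> V - M - B \<Longrightarrow> maker_wins W V (insert x M) B False
      \<Longrightarrow> maker_wins W V M B True"
| breaker_move: "V - M - B \<noteq> {} \<Longrightarrow> (\<forall>x \<in> V - M - B. maker_wins W V M (insert x B) True)
      \<Longrightarrow> maker_wins W V M B False"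

datatype outcome = OB | ON | OM

text \<open>Outcome: M if Maker wins both the M-game and the B-game, B if Breaker wins both,
  N if the first player wins (Maker wins the M-game, Breaker wins the B-game).
  (The remaining combination cannot occur in Maker-Breaker games.)\<close>
definition game_outcome :: "('a set \<Rightarrow> bool) \<Rightarrow> 'a set \<Rightarrow> outcome" where
  "game_outcome W V =
    (let mg = maker_wins W V {} {} True; bg = maker_wins W V {} {} False in
     if mg \<and> bg then OM else if \<not> mg \<and> \<not> bg then OB else ON)"

definition O_R :: "'a set \<Rightarrow> ('a \<Rightarrow> 'a \<Rightarrow> bool) \<Rightarrow> outcome" where
  "O_R V E = game_outcome (resolving_set V E) V"

definition O_Rk :: "nat \<Rightarrow> 'a set \<Rightarrow> ('a \<Rightarrow> 'a \<Rightarrow> bool) \<Rightarrow> outcome" where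
  "O_Rk k V E = game_outcome (k_resolving_set k V E) V"

end

theory Submission
  imports Defs
begin

text \<open>For \<open>k \<le> k'\<close> the truncated distance \<open>d\<^sub>k = min d\<^sub>k\<^sub>' (k + 1)\<close> is a function of \<open>d\<^sub>k\<^sub>'\<close>,
  so every distance-\<open>k\<close> resolving set is distance-\<open>k'\<close> resolving. Enlarging Maker's family
  of winning sets can only help Maker, in either game, so the outcome is monotone in \<open>k\<close>.
  Once \<open>k + 1 \<ge> diam G\<close> no distance is truncated and \<open>d\<^sub>k = d\<close> on the vertex set, so the
  two games coincide; for diameter 1 or 2 this already happens at \<open>k = 1\<close>.\<close>

fun outcome_rank :: "outcome \<Rightarrow> nat" where
  "outcome_rank OB = 0"
| "outcome_rank ON = 1"
| "outcome_rank OM = 2"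

instantiation outcome :: linorder
begin

definition less_eq_outcome :: "outcome \<Rightarrow> outcome \<Rightarrow> bool" where
  "a \<le> b \<longleftrightarrow> outcome_rank a \<le> outcome_rank b"

definition less_outcome :: "outcome \<Rightarrow> outcome \<Rightarrow> bool" where
  "a < b \<longleftrightarrow> outcome_rank a < outcome_rank b"

instance
proof
  fix a b :: outcome
  assume "a \<le> b" "b \<le> a"
  then show "a = b"
    unfolding less_eq_outcome_def by (cases a; cases b) auto
qed (auto simp: less_eq_outcome_def less_outcome_def)

end

lemma outcome_le_pairs:
  "{(a, b). a \<le> b} = {(OB, OB), (ON, ON), (OM, OM), (OB, ON), (OB, OM), (ON, OM)}"
proof (intro set_eqI iffI)
  fix p :: "outcome \<times> outcome"
  assume "p \<in> {(a, b). a \<le> b}"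
  then show "p \<in> {(OB, OB), (ON, ON), (OM, OM), (OB, ON), (OB, OM), (ON, OM)}"
    by (cases p; case_tac a; case_tac b) (auto simp: less_eq_outcome_def)
qed (auto simp: less_eq_outcome_def)

lemma maker_wins_mono:
  assumes "maker_wins W V M B t" and "\<And>S. W S \<Longrightarrow> W' S"
  shows "maker_wins W' V M B t"
  using assms(1)
proof (induction rule: maker_wins.induct)
  case (won M B t)
  then show ?case by (simp add: assms(2) maker_wins.won)
next
  case (maker_move x M B)
  then show ?case by (metis maker_wins.maker_move)
next
  case (breaker_move M B)
  then show ?case by (simp add: maker_wins.breaker_move)
qed

lemma game_outcome_mono:
  assumes "\<And>S. W S \<Longrightarrow> W' S"
  shows "game_outcome W V \<le> game_outcome W' V"
proof -
  have "maker_wins W V {} {} t \<Longrightarrow> maker_wins W' V {} {} t" for t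
    using maker_wins_mono assms by blast
  then show ?thesis
    unfolding game_outcome_def Let_def less_eq_outcome_def by auto
qed

lemma resolving_wrt_comp:
  assumes "resolving_wrt (\<lambda>x z. f (d x z)) V S"
  shows "resolving_wrt d V S"
  using assms unfolding resolving_wrt_def by metis

lemma resolving_wrt_cong:
  assumes "\<And>x z. x \<in> V \<Longrightarrow> z \<in> V \<Longrightarrow> d x z = d' x z"
  shows "resolving_wrt d V S \<longleftrightarrow> resolving_wrt d' V S"
  using assms unfolding resolving_wrt_def by (metis subsetD)

lemma gdist_k_min:
  assumes "k \<le> k'"
  shows "gdist_k k E x z = min (gdist_k k' E x z) (k + 1)"
  using assms unfolding gdist_k_def by auto

lemma k_resolving_set_mono:
  assumes "k \<le> k'" and "k_resolving_set k V E S"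
  shows "k_resolving_set k' V E S"
  using assms resolving_wrt_comp[of "\<lambda>n. min n (k + 1)" "gdist_k k' E" V S]
  unfolding k_resolving_set_def gdist_k_min[OF assms(1)] by simp

lemma O_Rk_mono:
  assumes "k \<le> k'"
  shows "O_Rk k V E \<le> O_Rk k' V E"
  unfolding O_Rk_def using k_resolving_set_mono[OF assms] by (rule game_outcome_mono)

lemma gdist_le_diam:
  assumes "finite V" and "x \<in> V" and "y \<in> V"
  shows "gdist E x y \<le> diam V E"
proof -
  have "{gdist E x y | x y. x \<in> V \<and> y \<in> V} = (\<lambda>(x, y). gdist E x y) ` (V \<times> V)"
    by auto
  then have "finite {gdist E x y | x y. x \<in> V \<and> y \<in> V}"
    using assms(1) by simp
  then show ?thesis
    unfolding diam_def using assms by (intro Max_ge) auto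
qed

lemma gdist_k_eq_gdist:
  assumes "finite V" and "diam V E - 1 \<le> k" and "x \<in> V" and "y \<in> V"
  shows "gdist_k k E x y = gdist E x y"
  using gdist_le_diam[OF assms(1,3,4), of E] assms(2) unfolding gdist_k_def by simp

lemma O_Rk_eq_O_R:
  assumes "finite V" and "diam V E - 1 \<le> k"
  shows "O_Rk k V E = O_R V E"
proof -
  have "k_resolving_set k V E = resolving_set V E"
    unfolding k_resolving_set_def resolving_set_def
    using gdist_k_eq_gdist[OF assms] by (intro ext resolving_wrt_cong)
  then show ?thesis
    unfolding O_Rk_def O_R_def by simp
qed

theorem corollary2p5:
  fixes V :: "'a set" and E :: "'a \<Rightarrow> 'a \<Rightarrow> bool"
  assumes "simple_graph V E" and "connected_graph V E"
  shows "(diam V E \<in> {1, 2} \<longrightarrow> (\<forall>k::nat. k \<ge> 1 \<longrightarrow> O_Rk k V E = O_R V E))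
       \<and> (\<forall>k k'::nat. 1 \<le> k \<longrightarrow> k < k' \<longrightarrow>
            (O_Rk k V E, O_Rk k' V E) \<in>
              {(OB, OB), (ON, ON), (OM, OM), (OB, ON), (OB, OM), (ON, OM)})
       \<and> (\<forall>k0::nat. 1 \<le> k0 \<longrightarrow> k0 \<ge> diam V E - 1 \<longrightarrow> O_Rk k0 V E = O_R V E)"
proof -
  have fin: "finite V"
    using assms(1) unfolding simple_graph_def by simp
  have "(O_Rk k V E, O_Rk k' V E) \<in> {(a, b). a \<le> b}" if "k < k'" for k k'
    using O_Rk_mono[of k k'] that by simp
  then show ?thesis
    unfolding outcome_le_pairs using O_Rk_eq_O_R[OF fin] by auto
qed

end
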